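(* Let $\mathcal{R}$ be a finite valuation ring of order $q^r$, where $q$ is a power of an odd prime, and let $\mathcal{A}\subset\mathcal{R}$ with $|\mathcal{A}|\ge 2q^{r-1}$. For all constants $c_1,c_2>0$ there is a constant $C>0$ depending only on $c_1,c_2$ such that: (1) if $|\mathcal{A}|\ge c_1 q^{r-\frac13}$, then $\max\{|\mathcal{A}+\mathcal{A}|, |\mathcal{A}^2+\mathcal{A}^2|\}\ge C q^{\frac r2}|\mathcal{A}|^{\frac12}$; (2) if $c_1 q^{r-\frac38}\le|\mathcal{A}|\le c_2 q^{r-\frac13}$, then $\max\{|\mathcal{A}+\mathcal{A}|, |\mathcal{A}^2+\mathcal{A}^2|\}\ge C\,\dfrac{|\mathcal{A}|^2}{q^{\frac{2r-1}{2}}}$; (3) if $|\mathcal{A}+\mathcal{A}|\,|\mathcal{A}|^2\ge c_1 q^{3r-1}$ and $|\mathcal{A}|\le c_2 q^{r-\frac38}$, then $\max\{|\mathcal{A}+\mathcal{A}|, |\mathcal{A}^2+\mathcal{A}^2|\}\ge C q^{r/3}|\mathcal{A}|^{2/3}$.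
   Context: A finite valuation ring is a finite, local, principal commutative ring with identity. Its unique maximal ideal is $(z)$ for a uniformizer $z$; the residue field $\mathcal{R}/(z)$ has $q$ elements; $r$ is the smallest positive integer with $z^r=0$; then $|\mathcal{R}|=q^r$ and $|(z)|=q^{r-1}$. For $\mathcal{A}\subset\mathcal{R}$: $\mathcal{A}+\mathcal{A}=\{a+b: a,b\in\mathcal{A}\}$, $\mathcal{A}^2=\{x^2: x\in\mathcal{A}\}$, and $\mathcal{A}^2+\mathcal{A}^2=\{u+v: u,v\in\mathcal{A}^2\}$. *)

theory Defs
  imports "HOL-Analysis.Analysis" "HOL-Algebra.Algebra" "HOL-Computational_Algebra.Primes"
begin

definition finite_valuation_ring :: "('a, 'b) ring_scheme \<Rightarrow> bool" where
  "finite_valuation_ring R \<longleftrightarrow>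
     cring R \<and> finite (carrier R) \<and>
     (\<exists>!M. maximalideal M R) \<and>
     (\<forall>I. ideal I R \<longrightarrow> principalideal I R)"

definition ring_sumset :: "('a, 'b) ring_scheme \<Rightarrow> 'a set \<Rightarrow> 'a set \<Rightarrow> 'a set" where
  "ring_sumset R A B = {a \<oplus>\<^bsub>R\<^esub> b | a b. a \<in> A \<and> b \<in> B}"

definition ring_squares :: "('a, 'b) ring_scheme \<Rightarrow> 'a set \<Rightarrow> 'a set" where
  "ring_squares R A = {x \<otimes>\<^bsub>R\<^esub> x | x. x \<in> A}"

end

theory Submission
  imports Defs "HOL-Library.Z2"
begin

text \<open>
  Index the parabolas $t = (s - b)^2 + c^2$ in $R^2$ by $(b, c) \in A \times (A \cap R^\times)$.
  Each $a \in A$ puts the point $(a + b, a^2 + c^2)$ of $P = (A + A) \times (A^2 + A^2)$ on the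
  parabola $(b, c)$, so $P$ carries at least $|A|$ incidences per parabola. On the other hand, as $2$
  is a unit ($q$ is odd), two parabolas whose axes differ by a unit meet at most once, and through a
  point pass at most two parabolas with a given axis. This bounds the second moment of the number of
  parabolas through a point of $R^2$, and Cauchy--Schwarz gives, for the set $W$ of parabolas,
  $|A|\,|W| \le |P|\,|W|/q^r + \sqrt{2\,|P|\,|W|\,q^{2r-1}}$.
  Since $|A \cap R^\times| \ge |A|/2$ when $|A| \ge 2q^{r-1}$, and $|P| \le M^2$ for
  $M = \max(|A+A|, |A^2+A^2|)$, one of the two terms dominates: $q^r|A| \le 2M^2$ or
  $|A|^4 \le 16\,q^{2r-1}M^2$. The three regimes follow from this dichotomy (the third one directly
  from the hypothesis on $|A+A|$) by elementary estimates.
\<close>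

section \<open>Counting\<close>

lemma even_card_fixpoint_free_involution:
  assumes "\<And>x. x \<in> S \<Longrightarrow> h x \<in> S" and "\<And>x. x \<in> S \<Longrightarrow> h (h x) = x"
    and "\<And>x. x \<in> S \<Longrightarrow> h x \<noteq> x"
  shows "even (card S)"
proof -
  have "(\<Sum>x\<in>S. 1 :: bit) = 0"
    by (rule sum_involution_eq_0[where h = h]) (use assms in auto)
  then have "of_nat (card S) = (0 :: bit)" by simp
  then show ?thesis by (metis even_of_nat_iff dvd_0_right)
qed

lemma card_eq_sum_card_fibres:
  assumes "finite S"
  shows "card S = (\<Sum>y\<in>f ` S. card {x \<in> S. f x = y})"
  using sum.group[OF assms finite_imageI[OF assms] subset_refl, of "\<lambda>_. 1 :: nat" f] by simp

lemma card_le_mult_card_image: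
  assumes "finite S" and "\<And>y. y \<in> f ` S \<Longrightarrow> card {x \<in> S. f x = y} \<le> k"
  shows "card S \<le> k * card (f ` S)"
proof -
  have "card S \<le> (\<Sum>y\<in>f ` S. k)"
    unfolding card_eq_sum_card_fibres[OF assms(1), of f] by (rule sum_mono) (rule assms(2))
  then show ?thesis by (simp add: mult.commute)
qed

lemma card_eq_card_image_mult:
  assumes "finite S" and "\<And>x. x \<in> S \<Longrightarrow> card {x' \<in> S. f x' = f x} = k"
  shows "card S = card (f ` S) * k"
proof -
  have "card S = (\<Sum>y\<in>f ` S. k)"
    unfolding card_eq_sum_card_fibres[OF assms(1), of f] by (rule sum.cong) (use assms(2) in auto)
  then show ?thesis by simp
qed

lemma sum_card_Collect_swap:
  assumes "finite A" and "finite B"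
  shows "(\<Sum>a\<in>A. card {b \<in> B. P a b}) = (\<Sum>b\<in>B. card {a \<in> A. P a b})"
proof -
  have "(\<Sum>a\<in>A. card {b \<in> B. P a b}) = (\<Sum>a\<in>A. \<Sum>b\<in>B. if P a b then 1 else 0)"
    using assms(2) by (simp add: sum.inter_filter[symmetric])
  also have "\<dots> = (\<Sum>b\<in>B. \<Sum>a\<in>A. if P a b then 1 else 0)" by (rule sum.swap)
  also have "\<dots> = (\<Sum>b\<in>B. card {a \<in> A. P a b})"
    using assms(1) by (simp add: sum.inter_filter[symmetric])
  finally show ?thesis .
qed

lemma sum_card_graphs_through:
  fixes f :: "'c \<Rightarrow> 'a \<Rightarrow> 'b"
  assumes "finite P" and "finite W"
  shows "(\<Sum>st\<in>P. card {w \<in> W. f w (fst st) = snd st}) = (\<Sum>w\<in>W. card {s. (s, f w s) \<in> P})"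
proof -
  have graph: "card {st \<in> P. f w (fst st) = snd st} = card {s. (s, f w s) \<in> P}" for w
  proof -
    have "{st \<in> P. f w (fst st) = snd st} = (\<lambda>s. (s, f w s)) ` {s. (s, f w s) \<in> P}" by force
    then show ?thesis by (simp add: card_image inj_on_def)
  qed
  show ?thesis using sum_card_Collect_swap[OF assms] by (simp add: graph)
qed

lemma sum_square_card_graphs_through:
  fixes f :: "'c \<Rightarrow> 'a \<Rightarrow> 'b"
  assumes "finite S" and "finite T" and "finite W"
    and maps_to: "\<And>w s. w \<in> W \<Longrightarrow> s \<in> S \<Longrightarrow> f w s \<in> T"
  shows "(\<Sum>st\<in>S \<times> T. card {w \<in> W. f w (fst st) = snd st} ^ 2)
       = (\<Sum>w\<in>W. \<Sum>w'\<in>W. card {s \<in> S. f w s = f w' s})"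
proof -
  \<comment> \<open>Pairs of graphs through \<open>(s, t)\<close> are the graphs of the pair family through \<open>(s, (t, t))\<close>.\<close>
  define g where "g ww s = (f (fst ww) s, f (snd ww) s)" for ww s
  define diag where "diag st = (fst st, (snd st, snd st))" for st :: "'a \<times> 'b"
  have square: "card {w \<in> W. f w s = t} ^ 2 = card {ww \<in> W \<times> W. g ww s = (t, t)}" for s t
  proof -
    have "{ww \<in> W \<times> W. g ww s = (t, t)} = {w \<in> W. f w s = t} \<times> {w \<in> W. f w s = t}"
      by (auto simp: g_def)
    then show ?thesis by (simp add: card_cartesian_product power2_eq_square)
  qed
  have inj: "inj_on diag (S \<times> T)" by (auto simp: inj_on_def diag_def)
  have "(\<Sum>st\<in>S \<times> T. card {w \<in> W. f w (fst st) = snd st} ^ 2)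
      = (\<Sum>st\<in>diag ` (S \<times> T). card {ww \<in> W \<times> W. g ww (fst st) = snd st})"
    unfolding sum.reindex[OF inj] by (simp add: square diag_def)
  also have "\<dots> = (\<Sum>ww\<in>W \<times> W. card {s. (s, g ww s) \<in> diag ` (S \<times> T)})"
    by (rule sum_card_graphs_through) (use assms in simp_all)
  also have "\<dots> = (\<Sum>ww\<in>W \<times> W. card {s \<in> S. f (fst ww) s = f (snd ww) s})"
    by (rule sum.cong) (auto simp: g_def diag_def image_iff maps_to intro!: arg_cong[where f = card])
  finally show ?thesis by (simp add: sum.cartesian_product split_def)
qed

lemma sum_le_card_mult_plus_sqrt_deviation:
  fixes N :: "'a \<Rightarrow> real" and \<mu> :: real
  assumes "finite C" and "P \<subseteq> C"
  shows "(\<Sum>x\<in>P. N x) \<le> real (card P) * \<mu> + sqrt (real (card P) * (\<Sum>x\<in>C. (N x - \<mu>)\<^sup>2))"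
proof -
  have "(\<Sum>x\<in>P. N x - \<mu>)\<^sup>2 \<le> (\<Sum>x\<in>P. (N x - \<mu>)\<^sup>2) * card P"
    by (rule sum_squared_le_sum_of_squares)
  also have "\<dots> \<le> (\<Sum>x\<in>C. (N x - \<mu>)\<^sup>2) * card P"
    by (rule mult_right_mono[OF sum_mono2[OF assms]]) simp_all
  finally have "(\<Sum>x\<in>P. N x - \<mu>) \<le> sqrt (card P * (\<Sum>x\<in>C. (N x - \<mu>)\<^sup>2))"
    by (intro real_le_rsqrt) (simp add: mult.commute)
  then show ?thesis by (simp add: sum_subtractf)
qed

lemma sum_square_deviation_eq:
  fixes N :: "'a \<Rightarrow> real" and \<mu> :: real
  shows "(\<Sum>x\<in>C. (N x - \<mu>)\<^sup>2) = (\<Sum>x\<in>C. (N x)\<^sup>2) - 2 * \<mu> * (\<Sum>x\<in>C. N x) + card C * \<mu>\<^sup>2"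
  by (simp add: power2_diff sum.distrib sum_subtractf sum_distrib_left sum_distrib_right mult_ac)

lemma incidence_bound_dichotomy:
  fixes a w p n V M :: real
  assumes bound: "a * w \<le> p * (w / n) + sqrt (p * (w * V))"
    and p: "p \<le> M\<^sup>2" and w: "a\<^sup>2 / 2 \<le> w"
    and "0 < a" and "0 < n" and "0 \<le> p" and "0 \<le> V"
  shows "n * a \<le> 2 * M\<^sup>2 \<or> a ^ 4 \<le> 8 * V * M\<^sup>2"
proof -
  have "0 < w" using w \<open>0 < a\<close> by (smt (verit) zero_less_power divide_pos_pos)
  consider "a * w / 2 \<le> p * (w / n)" | "a * w / 2 \<le> sqrt (p * (w * V))" using bound by linarith
  then show ?thesis
  proof cases
    case 1
    then have "n * a \<le> 2 * p" using \<open>0 < w\<close> \<open>0 < n\<close> by (simp add: field_simps)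
    then show ?thesis using p by simp
  next
    case 2
    have "(a * w / 2)\<^sup>2 \<le> (sqrt (p * (w * V)))\<^sup>2"
      by (rule power_mono[OF 2]) (use \<open>0 < a\<close> \<open>0 < w\<close> in simp)
    then have "(a * w / 2)\<^sup>2 \<le> p * (w * V)"
      using \<open>0 \<le> p\<close> \<open>0 < w\<close> \<open>0 \<le> V\<close> by simp
    then have "(a\<^sup>2 * w) * w \<le> (4 * p * V) * w" by (simp add: power2_eq_square field_simps)
    then have "a\<^sup>2 * w \<le> 4 * p * V" using \<open>0 < w\<close> by simp
    moreover have "a\<^sup>2 * (a\<^sup>2 / 2) \<le> a\<^sup>2 * w" by (rule mult_left_mono[OF w]) simp
    moreover have "4 * p * V \<le> 4 * M\<^sup>2 * V" using p \<open>0 \<le> V\<close> by (simp add: mult_right_mono)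
    ultimately have "a ^ 4 / 2 \<le> 4 * M\<^sup>2 * V" by (simp add: power4_eq_xxxx power2_eq_square)
    then show ?thesis by (simp add: algebra_simps)
  qed
qed

section \<open>Finite local rings with principal maximal ideal\<close>

lemma (in ring) Units_mult_eq_zero:
  assumes "u \<in> Units R" and "x \<in> carrier R" and "u \<otimes> x = \<zero>"
  shows "x = \<zero>"
  using assms by (metis Units_closed Units_l_cancel r_null zero_closed)

lemma (in ring) even_card_carrier_if_one_plus_one_eq_zero:
  assumes "\<one> \<oplus> \<one> = \<zero>" and "\<one> \<noteq> \<zero>"
  shows "even (card (carrier R))"
proof (rule even_card_fixpoint_free_involution[where h = "\<lambda>x. x \<oplus> \<one>"])
  fix x assume x: "x \<in> carrier R"
  show "x \<oplus> \<one> \<in> carrier R" using x by simp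
  show "x \<oplus> \<one> \<oplus> \<one> = x" using x assms(1) by (simp add: a_assoc)
  show "x \<oplus> \<one> \<noteq> x"
  proof
    assume "x \<oplus> \<one> = x"
    have "\<one> = \<ominus> x \<oplus> (x \<oplus> \<one>)" using x by algebra
    also have "\<dots> = \<zero>" using x \<open>x \<oplus> \<one> = x\<close> by (simp add: l_neg)
    finally show False using assms(2) by simp
  qed
qed

lemma (in ring) ideal_le_maximalideal_if_finite:
  assumes "finite (carrier R)" and "ideal I R" and "\<one> \<notin> I"
  obtains M where "maximalideal M R" and "I \<subseteq> M"
proof -
  define S where "S = {J. ideal J R \<and> \<one> \<notin> J}"
  have "S \<subseteq> Set.Pow (carrier R)" by (auto simp: S_def dest: ideal.Icarr)
  then have "finite S" using assms(1) by (meson finite_Pow_iff finite_subset)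
  then obtain M where M: "M \<in> S" "I \<subseteq> M" and max: "\<forall>J\<in>S. M \<subseteq> J \<longrightarrow> M = J"
    using finite_has_maximal2[of S I] assms(2,3) by (auto simp: S_def)
  have "maximalideal M R"
  proof (rule maximalidealI)
    show "ideal M R" and "carrier R \<noteq> M" using M by (auto simp: S_def)
    fix J assume "ideal J R" and "M \<subseteq> J" and "J \<subseteq> carrier R"
    then show "J = M \<or> J = carrier R"
      using max ideal.one_imp_carrier unfolding S_def by blast
  qed
  with M(2) show thesis using that by blast
qed

lemma (in cring) card_eq_card_mult_image_mult_card_annihilator:
  assumes "finite T" and T: "additive_subgroup T R" and w: "w \<in> carrier R"
    and ann: "{k \<in> carrier R. k \<otimes> w = \<zero>} \<subseteq> T"
  shows "card T = card ((\<lambda>x. x \<otimes> w) ` T) * card {k \<in> carrier R. k \<otimes> w = \<zero>}"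
proof (rule card_eq_card_image_mult[OF assms(1)])
  let ?K = "{k \<in> carrier R. k \<otimes> w = \<zero>}"
  have T_carrier: "T \<subseteq> carrier R" by (rule additive_subgroup.a_subset[OF T])
  fix x assume "x \<in> T"
  then have x: "x \<in> carrier R" using T_carrier by blast
  have "{x' \<in> T. x' \<otimes> w = x \<otimes> w} = (\<lambda>k. k \<oplus> x) ` ?K"
  proof (intro equalityI subsetI)
    fix x' assume "x' \<in> {x' \<in> T. x' \<otimes> w = x \<otimes> w}"
    then have x': "x' \<in> carrier R" and same: "x' \<otimes> w = x \<otimes> w" using T_carrier by auto
    have "(x' \<ominus> x) \<otimes> w = x' \<otimes> w \<ominus> x \<otimes> w" using x' x w by algebra
    then have "x' \<ominus> x \<in> ?K" using x' x w same by (simp add: r_right_minus_eq)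
    moreover have "x' = (x' \<ominus> x) \<oplus> x" using x' x by algebra
    ultimately show "x' \<in> (\<lambda>k. k \<oplus> x) ` ?K" by blast
  next
    fix y assume "y \<in> (\<lambda>k. k \<oplus> x) ` ?K"
    then obtain k where k: "k \<in> ?K" and y: "y = k \<oplus> x" by blast
    have "y \<in> T" using additive_subgroup.a_closed[OF T] ann k \<open>x \<in> T\<close> y by blast
    moreover have "y \<otimes> w = x \<otimes> w" using k x w y by (simp add: l_distr)
    ultimately show "y \<in> {x' \<in> T. x' \<otimes> w = x \<otimes> w}" by simp
  qed
  moreover have "inj_on (\<lambda>k. k \<oplus> x) ?K" using x by (auto intro: inj_onI)
  ultimately show "card {x' \<in> T. x' \<otimes> w = x \<otimes> w} = card ?K" by (simp add: card_image)
qed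

locale finite_local_ring = cring R for R (structure) +
  fixes z
  assumes finite_carrier: "finite (carrier R)"
    and uniformizer_closed: "z \<in> carrier R"
    and maximalideal_PIdl: "maximalideal (PIdl z) R"
    and maximalideal_unique: "\<And>M. maximalideal M R \<Longrightarrow> M = PIdl z"
begin

lemma ideal_PIdl: "ideal (PIdl z) R"
  by (rule cgenideal_ideal[OF uniformizer_closed])

interpretation m: ideal "PIdl z" R by (rule ideal_PIdl)

lemma PIdl_subset_carrier: "PIdl z \<subseteq> carrier R"
  by (rule m.a_subset)

lemma one_notin_PIdl: "\<one> \<notin> PIdl z"
  using maximalideal.I_notcarr[OF maximalideal_PIdl] m.one_imp_carrier by auto

lemma Units_iff_notin_PIdl:
  assumes x: "x \<in> carrier R"
  shows "x \<in> Units R \<longleftrightarrow> x \<notin> PIdl z"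
proof
  assume unit: "x \<in> Units R"
  show "x \<notin> PIdl z"
  proof
    assume "x \<in> PIdl z"
    then have "inv x \<otimes> x \<in> PIdl z" using m.I_l_closed Units_inv_closed unit by blast
    with unit show False using one_notin_PIdl by simp
  qed
next
  assume x_notin: "x \<notin> PIdl z"
  show "x \<in> Units R"
  proof (rule ccontr)
    assume "x \<notin> Units R"
    have "\<one> \<notin> PIdl x"
    proof
      assume "\<one> \<in> PIdl x"
      then obtain y where "y \<in> carrier R" "\<one> = y \<otimes> x" unfolding cgenideal_def by auto
      then have "x \<in> Units R" using x m_comm unfolding Units_def by auto
      with \<open>x \<notin> Units R\<close> show False by simp
    qed
    then obtain M where M: "maximalideal M R" and "PIdl x \<subseteq> M"
      using ideal_le_maximalideal_if_finite[OF finite_carrier cgenideal_ideal[OF x]] by blast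
    moreover have "M = PIdl z" using M by (rule maximalideal_unique)
    ultimately show False using cgenideal_self[OF x] x_notin by blast
  qed
qed

lemma uniformizer_nilpotent: "\<exists>n::nat>0. z [^] n = \<zero>"
proof -
  have "\<not> inj_on (\<lambda>n::nat. z [^] n) {..card (carrier R)}"
  proof
    assume "inj_on (\<lambda>n::nat. z [^] n) {..card (carrier R)}"
    then have "card {..card (carrier R)} \<le> card (carrier R)"
      by (rule card_inj_on_le) (use uniformizer_closed finite_carrier in auto)
    then show False by simp
  qed
  then obtain a b :: nat where "a < b" and same: "z [^] a = z [^] b"
    unfolding inj_on_def by (metis linorder_neqE_nat)
  define p where "p = b - a"
  have p: "p > 0" "b = a + p" using \<open>a < b\<close> unfolding p_def by auto
  have za: "z [^] a \<in> carrier R" and zp: "z [^] p \<in> carrier R"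
    using uniformizer_closed by auto
  have "z [^] p \<in> PIdl z"
  proof -
    obtain k where "p = Suc k" using p(1) by (cases p) auto
    then show ?thesis using uniformizer_closed unfolding cgenideal_def by auto
  qed
  have "\<one> \<ominus> z [^] p \<notin> PIdl z"
  proof
    assume "\<one> \<ominus> z [^] p \<in> PIdl z"
    then have "(\<one> \<ominus> z [^] p) \<oplus> z [^] p \<in> PIdl z" using m.a_closed \<open>z [^] p \<in> PIdl z\<close> by blast
    moreover have "(\<one> \<ominus> z [^] p) \<oplus> z [^] p = \<one>" using zp by algebra
    ultimately show False using one_notin_PIdl by simp
  qed
  then have unit: "\<one> \<ominus> z [^] p \<in> Units R" using Units_iff_notin_PIdl zp by simp
  have "(\<one> \<ominus> z [^] p) \<otimes> z [^] a = z [^] a \<ominus> z [^] a \<otimes> z [^] p" using za zp by algebra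
  also have "z [^] a \<otimes> z [^] p = z [^] b" using p(2) by (simp add: nat_pow_mult uniformizer_closed)
  also have "\<dots> = z [^] a" by (rule same[symmetric])
  also have "z [^] a \<ominus> z [^] a = \<zero>" using za by (simp add: a_minus_def r_neg)
  finally have "z [^] a = \<zero>" by (rule Units_mult_eq_zero[OF unit za])
  then have "z [^] Suc a = \<zero>" using uniformizer_closed by simp
  then show ?thesis by (metis zero_less_Suc)
qed

definition nil_index :: nat where
  "nil_index = (LEAST n. n > 0 \<and> z [^] n = \<zero>)"

lemma nil_index_pos: "nil_index > 0"
  and pow_nil_index: "z [^] nil_index = \<zero>"
  using LeastI_ex[OF uniformizer_nilpotent] unfolding nil_index_def by auto

lemma pow_neq_zero_if_less_nil_index:
  assumes "i < nil_index"
  shows "z [^] i \<noteq> \<zero>"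
proof (cases "i = 0")
  case True
  then show ?thesis using one_notin_PIdl m.zero_closed by auto
next
  case False
  then show ?thesis using not_less_Least[of i] assms unfolding nil_index_def by auto
qed

definition residue_card :: nat where
  "residue_card = card (carrier (R Quot PIdl z))"

lemma residue_card_mult_card_PIdl: "residue_card * card (PIdl z) = card (carrier R)"
  using a_lagrange[OF finite_carrier ideal.axioms(1)[OF ideal_PIdl]]
  unfolding residue_card_def FactRing_def order_def by simp

lemma card_PIdl_pow_eq_residue_card_mult:
  assumes "i < nil_index"
  shows "card (PIdl (z [^] i)) = residue_card * card (PIdl (z [^] Suc i))"
proof -
  \<comment> \<open>Multiplication by \<open>z\<^sup>i\<close> maps \<open>R\<close> onto \<open>(z\<^sup>i)\<close> and \<open>(z)\<close> onto \<open>(z\<^sup>i \<otimes> z)\<close>;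
    its kernel is the same for both and lies in \<open>(z)\<close> because \<open>z\<^sup>i \<noteq> 0\<close>.\<close>
  define w where "w = z [^] i"
  have w: "w \<in> carrier R" and "w \<noteq> \<zero>"
    unfolding w_def using uniformizer_closed pow_neq_zero_if_less_nil_index[OF assms] by auto
  define K where "K = {k \<in> carrier R. k \<otimes> w = \<zero>}"
  have "K \<subseteq> PIdl z"
  proof
    fix k assume "k \<in> K"
    then have k: "k \<in> carrier R" "k \<otimes> w = \<zero>" unfolding K_def by auto
    then have "k \<notin> Units R" using Units_mult_eq_zero w \<open>w \<noteq> \<zero>\<close> by blast
    then show "k \<in> PIdl z" using Units_iff_notin_PIdl k(1) by blast
  qed
  have shift: "(x \<otimes> z) \<otimes> w = x \<otimes> z [^] Suc i" if "x \<in> carrier R" for x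
    using that uniformizer_closed unfolding w_def nat_pow_Suc
    by (metis m_assoc m_comm nat_pow_closed)
  have "(\<lambda>x. x \<otimes> w) ` carrier R = PIdl w" unfolding cgenideal_def by auto
  then have "card (carrier R) = card (PIdl w) * card K"
    using card_eq_card_mult_image_mult_card_annihilator[OF finite_carrier ideal.axioms(1)[OF oneideal] w]
    unfolding K_def by simp
  moreover have "(\<lambda>x. x \<otimes> w) ` (PIdl z) = PIdl (z [^] Suc i)"
  proof -
    have "(\<lambda>x. x \<otimes> w) ` (PIdl z) = (\<lambda>x. (x \<otimes> z) \<otimes> w) ` carrier R"
      unfolding cgenideal_def by auto
    also have "\<dots> = (\<lambda>x. x \<otimes> z [^] Suc i) ` carrier R" by (rule image_cong) (simp_all only: shift)
    also have "\<dots> = PIdl (z [^] Suc i)" unfolding cgenideal_def by auto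
    finally show ?thesis .
  qed
  then have "card (PIdl z) = card (PIdl (z [^] Suc i)) * card K"
    using card_eq_card_mult_image_mult_card_annihilator[OF finite_subset[OF PIdl_subset_carrier finite_carrier]
        ideal.axioms(1)[OF ideal_PIdl] w] \<open>K \<subseteq> PIdl z\<close>
    unfolding K_def by simp
  moreover have "card K > 0"
    unfolding K_def using finite_carrier w by (auto simp: card_gt_0_iff)
  ultimately show ?thesis
    using residue_card_mult_card_PIdl unfolding w_def by (metis mult.assoc mult_right_cancel neq0_conv)
qed

lemma card_PIdl_pow_diff:
  assumes "j \<le> nil_index"
  shows "card (PIdl (z [^] (nil_index - j))) = residue_card ^ j"
  using assms
proof (induction j)
  case 0
  have "PIdl \<zero> = {\<zero>}" unfolding cgenideal_def by (auto intro!: exI[where x = \<zero>])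
  then show ?case using pow_nil_index by simp
next
  case (Suc j)
  then have i: "nil_index - Suc j < nil_index" and e: "Suc (nil_index - Suc j) = nil_index - j" by auto
  have "card (PIdl (z [^] (nil_index - Suc j))) = residue_card * card (PIdl (z [^] (nil_index - j)))"
    using card_PIdl_pow_eq_residue_card_mult[OF i] by (simp only: e)
  with Suc show ?case by simp
qed

lemma card_carrier: "card (carrier R) = residue_card ^ nil_index"
  using card_PIdl_pow_diff[of nil_index] cgenideal_eq_genideal[OF one_closed] genideal_one by simp

lemma card_PIdl: "card (PIdl z) = residue_card ^ (nil_index - 1)"
  using card_PIdl_pow_diff[of "nil_index - 1"] nil_index_pos uniformizer_closed by simp

lemma card_le_two_mult_card_Units:
  assumes A: "A \<subseteq> carrier R" and large: "2 * real residue_card ^ (nil_index - 1) \<le> real (card A)"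
  shows "real (card A) \<le> 2 * real (card (A \<inter> Units R))"
proof -
  have "A \<subseteq> (A \<inter> Units R) \<union> PIdl z" using A Units_iff_notin_PIdl by blast
  then have "card A \<le> card (A \<inter> Units R) + card (PIdl z)"
    using card_mono[of "(A \<inter> Units R) \<union> PIdl z" A] card_Un_le[of "A \<inter> Units R" "PIdl z"]
      finite_subset[OF A finite_carrier] finite_subset[OF PIdl_subset_carrier finite_carrier] by simp
  then have "real (card A) \<le> real (card (A \<inter> Units R)) + real (card (PIdl z))"
    by (simp only: of_nat_add[symmetric] of_nat_le_iff)
  then show ?thesis using large unfolding card_PIdl of_nat_power by linarith
qed

lemma one_plus_one_Units:
  assumes "odd residue_card"
  shows "\<one> \<oplus> \<one> \<in> Units R"
proof (rule ccontr)
  let ?Q = "R Quot PIdl z"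
  assume "\<one> \<oplus> \<one> \<notin> Units R"
  then have two: "\<one> \<oplus> \<one> \<in> PIdl z" using Units_iff_notin_PIdl by simp
  interpret Q: ring ?Q by (rule m.quotient_is_ring)
  have hom: "(+>) (PIdl z) \<in> ring_hom R ?Q" by (rule m.rcos_ring_hom)
  have "\<one>\<^bsub>?Q\<^esub> \<oplus>\<^bsub>?Q\<^esub> \<one>\<^bsub>?Q\<^esub> = PIdl z +> (\<one> \<oplus> \<one>)"
    using ring_hom_add[OF hom] ring_hom_one[OF hom] by simp
  also have "\<dots> = \<zero>\<^bsub>?Q\<^esub>" using m.a_rcos_const[OF two] unfolding FactRing_def by simp
  finally have "\<one>\<^bsub>?Q\<^esub> \<oplus>\<^bsub>?Q\<^esub> \<one>\<^bsub>?Q\<^esub> = \<zero>\<^bsub>?Q\<^esub>" .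
  moreover have "\<one>\<^bsub>?Q\<^esub> \<noteq> \<zero>\<^bsub>?Q\<^esub>"
  proof
    assume "\<one>\<^bsub>?Q\<^esub> = \<zero>\<^bsub>?Q\<^esub>"
    then have "PIdl z +> \<one> = PIdl z" unfolding FactRing_def by simp
    then show False using m.a_rcos_self[OF one_closed] one_notin_PIdl by simp
  qed
  ultimately have "even (card (carrier ?Q))" by (rule Q.even_card_carrier_if_one_plus_one_eq_zero)
  with assms show False unfolding residue_card_def by simp
qed

lemma square_eq_square_if_one_plus_one_Units:
  assumes two: "\<one> \<oplus> \<one> \<in> Units R" and u: "u \<in> Units R" and v: "v \<in> carrier R"
    and sq: "u \<otimes> u = v \<otimes> v"
  shows "v = u \<or> v = \<ominus> u"
proof -
  have u': "u \<in> carrier R" using u by (rule Units_closed)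
  have "(u \<ominus> v) \<otimes> (u \<oplus> v) = u \<otimes> u \<ominus> v \<otimes> v" using u' v by algebra
  also have "\<dots> = \<zero>" using sq v by (simp add: a_minus_def r_neg)
  finally have prod: "(u \<ominus> v) \<otimes> (u \<oplus> v) = \<zero>" .
  have "u \<ominus> v \<in> Units R \<or> u \<oplus> v \<in> Units R"
  proof (rule ccontr)
    assume "\<not> (u \<ominus> v \<in> Units R \<or> u \<oplus> v \<in> Units R)"
    then have "(u \<ominus> v) \<oplus> (u \<oplus> v) \<in> PIdl z" using Units_iff_notin_PIdl u' v m.a_closed by simp
    moreover have "(u \<ominus> v) \<oplus> (u \<oplus> v) = (\<one> \<oplus> \<one>) \<otimes> u" using u' v by algebra
    moreover have "(\<one> \<oplus> \<one>) \<otimes> u \<in> Units R" using two u by simp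
    ultimately show False using Units_iff_notin_PIdl by simp
  qed
  then show ?thesis
  proof
    assume "u \<ominus> v \<in> Units R"
    then have "u \<oplus> v = \<zero>" using prod u' v by (simp add: Units_mult_eq_zero)
    then have "v = \<ominus> u" using u' v by (metis add.inv_equality add.m_comm)
    then show ?thesis ..
  next
    assume "u \<oplus> v \<in> Units R"
    then have "u \<ominus> v = \<zero>" using prod u' v by (metis Units_mult_eq_zero m_comm minus_closed add.m_closed)
    then have "v = u" using u' v by (simp add: r_right_minus_eq)
    then show ?thesis ..
  qed
qed

section \<open>Parabolas over a finite local ring\<close>

definition parabola :: "'a \<times> 'a \<Rightarrow> 'a \<Rightarrow> 'a" where
  "parabola p s = (s \<ominus> fst p) \<otimes> (s \<ominus> fst p) \<oplus> snd p \<otimes> snd p"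

text \<open>The parameter \<open>c\<close> ranges over units so that \<open>c\<^sup>2\<close> determines \<open>c\<close> up to sign.\<close>

definition parabolas :: "'a set \<Rightarrow> ('a \<times> 'a) set" where
  "parabolas A = A \<times> (A \<inter> Units R)"

definition parabolas_through :: "'a set \<Rightarrow> 'a \<times> 'a \<Rightarrow> nat" where
  "parabolas_through A st = card {p \<in> parabolas A. parabola p (fst st) = snd st}"

lemma parabola_closed:
  "fst p \<in> carrier R \<Longrightarrow> snd p \<in> carrier R \<Longrightarrow> s \<in> carrier R \<Longrightarrow> parabola p s \<in> carrier R"
  unfolding parabola_def by simp

lemma parabolas_subset: "A \<subseteq> carrier R \<Longrightarrow> parabolas A \<subseteq> carrier R \<times> carrier R"
  unfolding parabolas_def by auto

lemma parabola_closed_parabolas: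
  "A \<subseteq> carrier R \<Longrightarrow> p \<in> parabolas A \<Longrightarrow> s \<in> carrier R \<Longrightarrow> parabola p s \<in> carrier R"
  using parabolas_subset parabola_closed by (metis mem_Times_iff subsetD)

lemma finite_parabolas: "A \<subseteq> carrier R \<Longrightarrow> finite (parabolas A)"
  by (rule finite_subset[OF parabolas_subset]) (simp_all add: finite_carrier)

lemma parabolas_meet_at_most_once:
  assumes two: "\<one> \<oplus> \<one> \<in> Units R"
    and b: "b \<in> carrier R" and c: "c \<in> carrier R" and b': "b' \<in> carrier R" and c': "c' \<in> carrier R"
    and axes: "b' \<ominus> b \<in> Units R" and s1: "s1 \<in> carrier R" and s2: "s2 \<in> carrier R"
    and meet1: "parabola (b, c) s1 = parabola (b', c') s1"
    and meet2: "parabola (b, c) s2 = parabola (b', c') s2"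
  shows "s1 = s2"
proof -
  define u where "u = (\<one> \<oplus> \<one>) \<otimes> (b' \<ominus> b)"
  define k where "k = b \<otimes> b \<oplus> c \<otimes> c \<ominus> (b' \<otimes> b' \<oplus> c' \<otimes> c')"
  have u: "u \<in> Units R" using two axes by (simp add: u_def)
  have k: "k \<in> carrier R" using b c b' c' by (simp add: k_def)
  have diff: "parabola (b, c) s \<ominus> parabola (b', c') s = u \<otimes> s \<oplus> k" if "s \<in> carrier R" for s
    unfolding parabola_def u_def k_def fst_conv snd_conv using that b c b' c' by algebra
  have zero: "u \<otimes> s \<oplus> k = \<zero>" if "s \<in> carrier R" and "parabola (b, c) s = parabola (b', c') s" for s
    using diff[OF that(1)] that parabola_closed[of "(b', c')" s] b' c' by (simp add: a_minus_def r_neg)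
  have "u \<otimes> s1 = u \<otimes> s2"
    using zero[OF s1 meet1] zero[OF s2 meet2] u k s1 s2 by (metis add.r_cancel Units_closed m_closed)
  then show ?thesis using u s1 s2 by simp
qed

lemma card_common_points_le_one:
  assumes two: "\<one> \<oplus> \<one> \<in> Units R"
    and "b \<in> carrier R" and "c \<in> carrier R" and "b' \<in> carrier R" and "c' \<in> carrier R"
    and "b' \<ominus> b \<in> Units R"
  shows "card {s \<in> carrier R. parabola (b, c) s = parabola (b', c') s} \<le> 1"
  using parabolas_meet_at_most_once[OF assms] finite_carrier by (simp add: card_le_Suc0_iff_eq)

lemma card_parabolas_through_near_axis_le:
  assumes A: "A \<subseteq> carrier R" and two: "\<one> \<oplus> \<one> \<in> Units R"
    and b: "b \<in> carrier R" and s: "s \<in> carrier R"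
  shows "card {p \<in> parabolas A. fst p \<ominus> b \<in> PIdl z \<and> parabola p s = t} \<le> 2 * card (PIdl z)"
proof -
  let ?F = "{p \<in> parabolas A. fst p \<ominus> b \<in> PIdl z \<and> parabola p s = t}"
  let ?axis = "\<lambda>p. fst p \<ominus> b"
  have "finite ?F" using finite_parabolas[OF A] by simp
  have "card ?F \<le> 2 * card (?axis ` ?F)"
  proof (rule card_le_mult_card_image[OF \<open>finite ?F\<close>])
    fix y assume "y \<in> ?axis ` ?F"
    then obtain b0 c0 where p0: "(b0, c0) \<in> ?F" and y: "y = b0 \<ominus> b" by auto
    have "{p \<in> ?F. ?axis p = y} \<subseteq> {(b0, c0), (b0, \<ominus> c0)}"
    proof
      fix p assume "p \<in> {p \<in> ?F. ?axis p = y}"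
      then obtain b1 c1 where p: "p = (b1, c1)" "(b1, c1) \<in> ?F" and "b1 \<ominus> b = b0 \<ominus> b"
        using y by (cases p) auto
      have c0: "c0 \<in> Units R" and carr: "b0 \<in> carrier R" "b1 \<in> carrier R" "c1 \<in> carrier R"
        using p0 p A by (auto simp: parabolas_def)
      have "b1 = (b1 \<ominus> b) \<oplus> b" using carr b by algebra
      also have "\<dots> = b0" using \<open>b1 \<ominus> b = b0 \<ominus> b\<close> carr b by algebra
      finally have "b1 = b0" .
      have "(s \<ominus> b0) \<otimes> (s \<ominus> b0) \<oplus> c0 \<otimes> c0 = (s \<ominus> b0) \<otimes> (s \<ominus> b0) \<oplus> c1 \<otimes> c1"
        using p0 p \<open>b1 = b0\<close> by (simp add: parabola_def)
      then have "c0 \<otimes> c0 = c1 \<otimes> c1"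
        using add.l_cancel[of "(s \<ominus> b0) \<otimes> (s \<ominus> b0)" "c0 \<otimes> c0" "c1 \<otimes> c1"] carr Units_closed[OF c0] s
        by simp
      then have "c1 = c0 \<or> c1 = \<ominus> c0"
        by (rule square_eq_square_if_one_plus_one_Units[OF two c0 carr(3)])
      then show "p \<in> {(b0, c0), (b0, \<ominus> c0)}" using p \<open>b1 = b0\<close> by auto
    qed
    then have "card {p \<in> ?F. ?axis p = y} \<le> card {(b0, c0), (b0, \<ominus> c0)}"
      by (rule card_mono[rotated]) simp
    also have "\<dots> \<le> 2" by (simp add: card_insert_if)
    finally show "card {p \<in> ?F. ?axis p = y} \<le> 2" .
  qed
  also have "card (?axis ` ?F) \<le> card (PIdl z)"
    by (rule card_mono[OF finite_subset[OF PIdl_subset_carrier finite_carrier]]) auto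
  finally show ?thesis by simp
qed

lemma sum_card_common_points_le:
  assumes A: "A \<subseteq> carrier R" and two: "\<one> \<oplus> \<one> \<in> Units R" and p: "p \<in> parabolas A"
  shows "(\<Sum>p'\<in>parabolas A. card {s \<in> carrier R. parabola p s = parabola p' s})
         \<le> card (parabolas A) + 2 * card (PIdl z) * card (carrier R)"
proof -
  obtain b c where p_eq: "p = (b, c)" by (cases p)
  have b: "b \<in> carrier R" and c: "c \<in> carrier R" using p A by (auto simp: parabolas_def p_eq)
  let ?common = "\<lambda>p'. card {s \<in> carrier R. parabola p s = parabola p' s}"
  define far where "far = {p' \<in> parabolas A. fst p' \<ominus> b \<notin> PIdl z}"
  define near where "near = {p' \<in> parabolas A. fst p' \<ominus> b \<in> PIdl z}"
  have fin: "finite far" "finite near" using finite_parabolas[OF A] by (auto simp: far_def near_def)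
  have "parabolas A = far \<union> near" and "far \<inter> near = {}" by (auto simp: far_def near_def)
  then have split: "(\<Sum>p'\<in>parabolas A. ?common p') = (\<Sum>p'\<in>far. ?common p') + (\<Sum>p'\<in>near. ?common p')"
    using sum.union_disjoint[OF fin] by simp
  have far_le: "(\<Sum>p'\<in>far. ?common p') \<le> card (parabolas A)"
  proof -
    have "?common p' \<le> 1" if "p' \<in> far" for p'
    proof -
      obtain b' c' where p': "p' = (b', c')" by (cases p')
      have "b' \<in> carrier R" "c' \<in> carrier R" "b' \<ominus> b \<in> Units R"
        using that A b Units_iff_notin_PIdl by (auto simp: far_def parabolas_def p')
      then show ?thesis unfolding p_eq p' by (rule card_common_points_le_one[OF two b c])
    qed
    then have "(\<Sum>p'\<in>far. ?common p') \<le> card far" using sum_mono[of far ?common "\<lambda>_. 1"] by simp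
    also have "\<dots> \<le> card (parabolas A)"
      by (rule card_mono) (auto simp: far_def finite_parabolas[OF A])
    finally show ?thesis .
  qed
  have near_le: "(\<Sum>p'\<in>near. ?common p') \<le> 2 * card (PIdl z) * card (carrier R)"
  proof -
    have "(\<Sum>p'\<in>near. ?common p') = (\<Sum>s\<in>carrier R. card {p' \<in> near. parabola p s = parabola p' s})"
      by (rule sum_card_Collect_swap) (use fin finite_carrier in auto)
    also have "\<dots> \<le> (\<Sum>s\<in>carrier R. 2 * card (PIdl z))"
    proof (rule sum_mono)
      fix s assume s: "s \<in> carrier R"
      have "{p' \<in> near. parabola p s = parabola p' s}
          = {p' \<in> parabolas A. fst p' \<ominus> b \<in> PIdl z \<and> parabola p' s = parabola p s}"
        by (auto simp: near_def)
      then show "card {p' \<in> near. parabola p s = parabola p' s} \<le> 2 * card (PIdl z)"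
        using card_parabolas_through_near_axis_le[OF A two b s] by simp
    qed
    also have "\<dots> = 2 * card (PIdl z) * card (carrier R)" by simp
    finally show ?thesis .
  qed
  show ?thesis unfolding split using add_mono[OF far_le near_le] .
qed

lemma sum_parabolas_through:
  assumes A: "A \<subseteq> carrier R"
  shows "(\<Sum>st\<in>carrier R \<times> carrier R. parabolas_through A st) = card (parabolas A) * card (carrier R)"
proof -
  have "{s. (s, parabola p s) \<in> carrier R \<times> carrier R} = carrier R" if "p \<in> parabolas A" for p
    using parabola_closed_parabolas[OF A that] by blast
  then show ?thesis
    unfolding parabolas_through_def
    using sum_card_graphs_through[of "carrier R \<times> carrier R" "parabolas A" parabola]
      finite_carrier finite_parabolas[OF A] by simp
qed

lemma sum_square_parabolas_through_le:
  assumes A: "A \<subseteq> carrier R" and two: "\<one> \<oplus> \<one> \<in> Units R"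
  shows "(\<Sum>st\<in>carrier R \<times> carrier R. parabolas_through A st ^ 2)
    \<le> card (parabolas A) * (card (parabolas A) + 2 * card (PIdl z) * card (carrier R))"
proof -
  have "(\<Sum>st\<in>carrier R \<times> carrier R. parabolas_through A st ^ 2)
      = (\<Sum>p\<in>parabolas A. \<Sum>p'\<in>parabolas A. card {s \<in> carrier R. parabola p s = parabola p' s})"
    unfolding parabolas_through_def
    by (rule sum_square_card_graphs_through)
      (simp_all add: finite_carrier finite_parabolas[OF A] parabola_closed_parabolas[OF A])
  also have "\<dots> \<le> (\<Sum>p\<in>parabolas A. card (parabolas A) + 2 * card (PIdl z) * card (carrier R))"
    by (rule sum_mono) (rule sum_card_common_points_le[OF A two])
  finally show ?thesis by simp
qed

lemma card_mult_card_parabolas_le_sum_parabolas_through: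
  assumes A: "A \<subseteq> carrier R"
  defines "P \<equiv> ring_sumset R A A \<times> ring_sumset R (ring_squares R A) (ring_squares R A)"
  shows "card A * card (parabolas A) \<le> (\<Sum>st\<in>P. parabolas_through A st)"
proof -
  have P: "P \<subseteq> carrier R \<times> carrier R"
    using A unfolding P_def ring_sumset_def ring_squares_def by auto
  then have "finite P" using finite_carrier by (meson finite_SigmaI finite_subset)
  have incident: "card A \<le> card {s. (s, parabola p s) \<in> P}" if p: "p \<in> parabolas A" for p
  proof -
    obtain b c where p_eq: "p = (b, c)" and "b \<in> A" "c \<in> A" using p by (auto simp: parabolas_def)
    have "(\<lambda>a. a \<oplus> b) ` A \<subseteq> {s. (s, parabola p s) \<in> P}"
    proof clarify
      fix a assume "a \<in> A"
      have "a \<in> carrier R" and "b \<in> carrier R" using A \<open>a \<in> A\<close> \<open>b \<in> A\<close> by auto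
      then have "a \<oplus> b \<ominus> b = a" by algebra
      then have "parabola p (a \<oplus> b) = a \<otimes> a \<oplus> c \<otimes> c" by (simp add: p_eq parabola_def)
      then show "(a \<oplus> b, parabola p (a \<oplus> b)) \<in> P"
        unfolding P_def ring_sumset_def ring_squares_def using \<open>a \<in> A\<close> \<open>b \<in> A\<close> \<open>c \<in> A\<close> by blast
    qed
    moreover have "inj_on (\<lambda>a. a \<oplus> b) A"
      using A \<open>b \<in> A\<close> by (intro inj_onI) (metis add.r_cancel subsetD)
    moreover have "finite {s. (s, parabola p s) \<in> P}"
      by (rule finite_subset[OF _ finite_imageI[OF \<open>finite P\<close>, of fst]]) force
    ultimately show ?thesis using card_inj_on_le by blast
  qed
  have "card A * card (parabolas A) = (\<Sum>p\<in>parabolas A. card A)" by simp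
  also have "\<dots> \<le> (\<Sum>p\<in>parabolas A. card {s. (s, parabola p s) \<in> P})"
    by (rule sum_mono) (rule incident)
  also have "\<dots> = (\<Sum>st\<in>P. parabolas_through A st)"
    unfolding parabolas_through_def
    by (rule sum_card_graphs_through[OF \<open>finite P\<close> finite_parabolas[OF A], symmetric])
  finally show ?thesis .
qed

lemma sum_square_deviation_parabolas_through_le:
  assumes A: "A \<subseteq> carrier R" and two: "\<one> \<oplus> \<one> \<in> Units R"
  defines "n \<equiv> real (card (carrier R))" and "w \<equiv> real (card (parabolas A))"
  shows "(\<Sum>st\<in>carrier R \<times> carrier R. (real (parabolas_through A st) - w / n)\<^sup>2)
    \<le> w * (2 * real (card (PIdl z)) * n)"
proof -
  let ?C = "carrier R \<times> carrier R"
  let ?N = "\<lambda>st. real (parabolas_through A st)"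
  have "n > 0" using finite_carrier unfolding n_def by (auto simp: card_gt_0_iff)
  have first: "(\<Sum>st\<in>?C. ?N st) = w * n"
    using arg_cong[OF sum_parabolas_through[OF A], of real] unfolding w_def n_def by simp
  have "real (\<Sum>st\<in>?C. parabolas_through A st ^ 2)
      \<le> real (card (parabolas A) * (card (parabolas A) + 2 * card (PIdl z) * card (carrier R)))"
    using sum_square_parabolas_through_le[OF A two] by (simp only: of_nat_le_iff)
  then have second: "(\<Sum>st\<in>?C. (?N st)\<^sup>2) \<le> w * (w + 2 * real (card (PIdl z)) * n)"
    unfolding w_def n_def by simp
  have "(\<Sum>st\<in>?C. (?N st - w / n)\<^sup>2) = (\<Sum>st\<in>?C. (?N st)\<^sup>2) - 2 * (w / n) * (w * n) + n\<^sup>2 * (w / n)\<^sup>2"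
    unfolding sum_square_deviation_eq first by (simp add: n_def card_cartesian_product power2_eq_square)
  also have "\<dots> = (\<Sum>st\<in>?C. (?N st)\<^sup>2) - w * w"
    using \<open>n > 0\<close> by (simp add: field_simps power2_eq_square)
  also have "\<dots> \<le> w * (2 * real (card (PIdl z)) * n)" using second by (simp add: algebra_simps)
  finally show ?thesis .
qed

lemma sumset_squares_dichotomy:
  assumes A: "A \<subseteq> carrier R" and odd: "odd residue_card"
    and large: "2 * real residue_card ^ (nil_index - 1) \<le> real (card A)"
  defines "M \<equiv> real (max (card (ring_sumset R A A))
                          (card (ring_sumset R (ring_squares R A) (ring_squares R A))))"
  shows "real residue_card ^ nil_index * real (card A) \<le> 2 * M\<^sup>2
    \<or> real (card A) ^ 4 \<le> 16 * real residue_card ^ (2 * nil_index - 1) * M\<^sup>2"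
proof -
  define S where "S = ring_sumset R A A"
  define D where "D = ring_sumset R (ring_squares R A) (ring_squares R A)"
  define n where "n = real (card (carrier R))"
  define w where "w = real (card (parabolas A))"
  define V where "V = 2 * real (card (PIdl z)) * n"
  let ?N = "\<lambda>st. real (parabolas_through A st)"
  have two: "\<one> \<oplus> \<one> \<in> Units R" by (rule one_plus_one_Units[OF odd])
  have "0 < residue_card" using odd by (rule odd_pos)
  have n: "n = real residue_card ^ nil_index" unfolding n_def card_carrier by simp
  have V: "8 * V = 16 * real residue_card ^ (2 * nil_index - 1)"
  proof -
    have "(nil_index - 1) + nil_index = 2 * nil_index - 1" using nil_index_pos by simp
    then show ?thesis unfolding V_def n card_PIdl by (simp flip: power_add)
  qed
  have SD: "S \<times> D \<subseteq> carrier R \<times> carrier R"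
    using A unfolding S_def D_def ring_sumset_def ring_squares_def by auto
  have "real (card A) * real (card A) \<le> real (card A) * (2 * real (card (A \<inter> Units R)))"
    by (rule mult_left_mono[OF card_le_two_mult_card_Units[OF A large]]) simp
  then have w: "(real (card A))\<^sup>2 / 2 \<le> w"
    unfolding w_def parabolas_def card_cartesian_product by (simp add: power2_eq_square)
  have "real (card A) * w \<le> (\<Sum>st\<in>S \<times> D. ?N st)"
    using card_mult_card_parabolas_le_sum_parabolas_through[OF A] unfolding w_def S_def D_def
    by (metis of_nat_le_iff of_nat_mult of_nat_sum)
  also have "\<dots> \<le> card (S \<times> D) * (w / n) + sqrt (card (S \<times> D) * (\<Sum>st\<in>carrier R \<times> carrier R. (?N st - w / n)\<^sup>2))"
    by (rule sum_le_card_mult_plus_sqrt_deviation[OF _ SD]) (simp add: finite_carrier)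
  also have "\<dots> \<le> card (S \<times> D) * (w / n) + sqrt (card (S \<times> D) * (w * V))"
    using sum_square_deviation_parabolas_through_le[OF A two] unfolding V_def n_def w_def
    by (simp add: mult_left_mono)
  finally have bound: "real (card A) * w \<le> card (S \<times> D) * (w / n) + sqrt (card (S \<times> D) * (w * V))" .
  have "card (S \<times> D) \<le> max (card S) (card D) * max (card S) (card D)"
    unfolding card_cartesian_product by (rule mult_le_mono) auto
  then have "real (card (S \<times> D)) \<le> M\<^sup>2"
    unfolding M_def S_def D_def power2_eq_square by (metis of_nat_le_iff of_nat_mult)
  moreover have "0 < real (card A)" using large \<open>0 < residue_card\<close> by (smt (verit) zero_less_power of_nat_0_less_iff)
  moreover have "0 < n" "0 \<le> V" using n \<open>0 < residue_card\<close> by (simp_all add: V_def n_def)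
  ultimately show ?thesis
    using incidence_bound_dichotomy[OF bound _ w] V n by (simp add: mult.commute)
qed

end

section \<open>The three regimes\<close>

lemma powr_power_eq_power:
  fixes Q x :: real
  assumes "Q > 0" "real k * x = real m"
  shows "(Q powr x) ^ k = Q ^ m"
proof -
  have "(Q powr x) ^ k = Q powr (real k * x)" using powr_power[of Q x k] assms(1) by simp
  also have "\<dots> = Q ^ m" using assms by (simp add: powr_realpow)
  finally show ?thesis .
qed

definition sum_product_constant :: "real \<Rightarrow> real \<Rightarrow> real" where
  "sum_product_constant c1 c2 = (min 1 c1)^2 / (4 * (max 1 c2)^3)"

lemma sum_product_constant_bounds:
  fixes c1 c2 :: real
  assumes c1: "c1 > 0" and c2: "c2 > 0"
  defines "C \<equiv> sum_product_constant c1 c2"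
  shows "C > 0" "C^2 \<le> 1/16" "C^2 \<le> c1^3/16" "2 * C^2 * c2^3 \<le> 1" "C^3 * c2^8 \<le> c1^3"
proof -
  define e where "e = min 1 c1"
  define d where "d = max 1 c2"
  have C_eq: "C = e^2 / (4 * d^3)" unfolding C_def sum_product_constant_def e_def d_def ..
  have e0: "e > 0" and e1: "e \<le> 1" and ec: "e \<le> c1" unfolding e_def using c1 by auto
  have d1: "d \<ge> 1" and dc: "c2 \<le> d" unfolding d_def by auto
  have D1: "d^3 \<ge> 1" using d1 by simp
  have D0: "d^3 > 0" using D1 by linarith
  show C0: "C > 0" unfolding C_eq using e0 D0 by simp
  have CD: "C * (4 * d^3) = e^2" unfolding C_eq using D0 by simp
  have e2: "e^2 \<le> 1" using e0 e1 by (simp add: power_le_one)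
  have e2e: "e^2 \<le> e" using e0 e1 by (simp add: power2_eq_square mult_left_le)
  have Cle: "C \<le> e^2 / 4"
  proof -
    have "C * 4 \<le> C * (4 * d^3)" using C0 D1 by simp
    then show ?thesis using CD by simp
  qed
  have C14: "C \<le> 1/4" using Cle e2 by simp
  have "C^2 \<le> (1/4)^2" by (rule power_mono[OF C14]) (use C0 in simp)
  then show "C^2 \<le> 1/16" by (simp add: power2_eq_square)
  have "C^2 \<le> (e^2/4)^2" by (rule power_mono[OF Cle]) (use C0 in simp)
  also have "\<dots> = e^4/16" by (simp add: power2_eq_square power4_eq_xxxx)
  also have "\<dots> \<le> e^3/16"
  proof -
    have "e^4 \<le> e^3" by (rule power_decreasing) (use e0 e1 in auto)
    then show ?thesis by simp
  qed
  also have "\<dots> \<le> c1^3/16"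
  proof -
    have "e^3 \<le> c1^3" by (rule power_mono[OF ec]) (use e0 in simp)
    then show ?thesis by simp
  qed
  finally show "C^2 \<le> c1^3/16" .
  have C4D: "C * (4 * d^3) \<le> 1" using CD e2 by simp
  have "2 * C^2 * c2^3 \<le> 2 * C^2 * d^3"
  proof -
    have "c2^3 \<le> d^3" by (rule power_mono[OF dc]) (use c2 in simp)
    then show ?thesis using C0 by simp
  qed
  also have "\<dots> = (C * (4 * d^3)) * (C / 2)" by (simp add: power2_eq_square)
  also have "\<dots> \<le> 1 * (C / 2)" by (rule mult_right_mono[OF C4D]) (use C0 in simp)
  also have "\<dots> \<le> 1" using C14 by simp
  finally show "2 * C^2 * c2^3 \<le> 1" .
  have Cd: "C * d^3 \<le> c1"
  proof -
    have "C * d^3 \<le> C * (4 * d^3)" using C0 D0 by simp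
    also have "\<dots> \<le> e" using CD e2e by simp
    finally show ?thesis using ec by simp
  qed
  have "C^3 * c2^8 \<le> C^3 * d^8"
  proof -
    have "c2^8 \<le> d^8" by (rule power_mono[OF dc]) (use c2 in simp)
    then show ?thesis using C0 by simp
  qed
  also have "\<dots> \<le> C^3 * d^9"
  proof -
    have "d^8 \<le> d^9" by (rule power_increasing) (use d1 in auto)
    then show ?thesis using C0 by simp
  qed
  also have "\<dots> = (C * d^3)^3" by (simp add: power_mult_distrib power_mult[symmetric])
  also have "\<dots> \<le> c1^3" by (rule power_mono[OF Cd]) (use C0 D0 in simp)
  finally show "C^3 * c2^8 \<le> c1^3" .
qed

lemma max_bound_large:
  fixes Q a M C c1 :: real and r :: nat
  assumes Q: "Q > 0" and r: "r \<ge> 1" and a: "a > 0" and M: "M \<ge> 0" and C: "C > 0"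
    and dichotomy: "Q^r * a \<le> 2 * M^2 \<or> a^4 \<le> 16 * Q^(2*r-1) * M^2"
    and C_le: "C^2 \<le> 1/16" and C_le_c1: "C^2 \<le> c1^3/16" and c1: "c1 > 0"
    and large: "a \<ge> c1 * Q powr (real r - 1/3)"
  shows "M \<ge> C * Q powr (real r / 2) * a powr (1/2)"
proof -
  define K where "K = Q^(2*r-1)"
  have K0: "K > 0" unfolding K_def using Q by simp
  have QK: "Q^r * K = Q^(3*r-1)"
  proof -
    have "r + (2*r-1) = 3*r-1" using r by simp
    then show ?thesis unfolding K_def by (metis power_add)
  qed
  have cube_le: "c1^3 * Q^(3*r-1) \<le> a^3"
  proof -
    have "(c1 * Q powr (real r - 1/3))^3 \<le> a^3" by (rule power_mono[OF large]) (use c1 in simp)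
    moreover have "(Q powr (real r - 1/3))^3 = Q^(3*r-1)"
      by (rule powr_power_eq_power[OF Q]) (use r in \<open>simp add: of_nat_diff algebra_simps\<close>)
    ultimately show ?thesis by (simp add: power_mult_distrib)
  qed
  have square: "(C * Q powr (real r / 2) * a powr (1/2))^2 = C^2 * Q^r * a"
  proof -
    have "(Q powr (real r / 2))^2 = Q^r" by (rule powr_power_eq_power[OF Q]) simp
    moreover have "(a powr (1/2))^2 = a^1" by (rule powr_power_eq_power[OF a]) simp
    ultimately show ?thesis by (simp add: power_mult_distrib)
  qed
  have square_le: "C^2 * Q^r * a \<le> M^2"
    using dichotomy
  proof
    assume h: "Q^r * a \<le> 2 * M^2"
    have "C^2 * Q^r * a \<le> (1/16) * (Q^r * a)"
      using mult_right_mono[OF C_le, of "Q^r * a"] Q a by (simp add: mult.assoc)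
    then show ?thesis using h zero_le_power2[of M] by linarith
  next
    assume h: "a^4 \<le> 16 * Q^(2*r-1) * M^2"
    have "(C^2 * Q^r * a) * (16 * K) = (16 * C^2) * (Q^r * K) * a" by (simp add: algebra_simps)
    also have "\<dots> \<le> c1^3 * (Q^r * K) * a"
    proof -
      have "16 * C^2 \<le> c1^3" using C_le_c1 by simp
      then show ?thesis using Q a K0 by (simp add: mult_right_mono)
    qed
    also have "\<dots> = (c1^3 * Q^(3*r-1)) * a" unfolding QK by simp
    also have "\<dots> \<le> a^3 * a" by (rule mult_right_mono[OF cube_le]) (use a in simp)
    also have "\<dots> = a^4" by (simp add: power_def)
    also have "\<dots> \<le> M^2 * (16 * K)" using h unfolding K_def by (simp add: algebra_simps)
    finally show ?thesis using K0 by (simp add: mult_le_cancel_right)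
  qed
  show ?thesis
  proof (rule power2_le_imp_le)
    show "(C * Q powr (real r / 2) * a powr (1/2))^2 \<le> M^2" using square square_le by simp
    show "0 \<le> M" by (rule M)
  qed
qed

lemma max_bound_medium:
  fixes Q a M C c2 :: real and r :: nat
  assumes Q: "Q > 0" and r: "r \<ge> 1" and a: "a > 0" and M: "M \<ge> 0" and C: "C > 0"
    and dichotomy: "Q^r * a \<le> 2 * M^2 \<or> a^4 \<le> 16 * Q^(2*r-1) * M^2"
    and C_le: "C^2 \<le> 1/16" and C_le_c2: "2 * C^2 * c2^3 \<le> 1" and c2: "c2 > 0"
    and medium: "a \<le> c2 * Q powr (real r - 1/3)"
  shows "M \<ge> C * a^2 / Q powr ((2 * real r - 1) / 2)"
proof -
  define K where "K = Q^(2*r-1)"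
  have K0: "K > 0" unfolding K_def using Q by simp
  have QK: "Q^r * K = Q^(3*r-1)"
  proof -
    have "r + (2*r-1) = 3*r-1" using r by simp
    then show ?thesis unfolding K_def by (metis power_add)
  qed
  have cube_le: "a^3 \<le> c2^3 * Q^(3*r-1)"
  proof -
    have "a^3 \<le> (c2 * Q powr (real r - 1/3))^3" by (rule power_mono[OF medium]) (use a in simp)
    moreover have "(Q powr (real r - 1/3))^3 = Q^(3*r-1)"
      by (rule powr_power_eq_power[OF Q]) (use r in \<open>simp add: of_nat_diff algebra_simps\<close>)
    ultimately show ?thesis by (simp add: power_mult_distrib)
  qed
  have square: "(C * a^2 / Q powr ((2 * real r - 1) / 2))^2 = C^2 * a^4 / K"
  proof -
    have "(Q powr ((2 * real r - 1) / 2))^2 = Q^(2*r-1)"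
      by (rule powr_power_eq_power[OF Q]) (use r in \<open>simp add: of_nat_diff field_simps\<close>)
    then show ?thesis unfolding K_def by (simp add: power_mult_distrib power_divide power4_eq_xxxx power2_eq_square)
  qed
  have square_le: "C^2 * a^4 \<le> K * M^2"
    using dichotomy
  proof
    assume h: "Q^r * a \<le> 2 * M^2"
    have "C^2 * a^4 = C^2 * a^3 * a" by (simp add: power_def)
    also have "\<dots> \<le> C^2 * (c2^3 * Q^(3*r-1)) * a"
      using cube_le C a by (simp add: mult_right_mono)
    also have "\<dots> = (2 * C^2 * c2^3) * K * ((Q^r * a) / 2)" unfolding QK[symmetric] by (simp add: algebra_simps)
    also have "\<dots> \<le> 1 * K * ((Q^r * a) / 2)"
      by (rule mult_right_mono[OF mult_right_mono[OF C_le_c2]]) (use K0 Q a in simp_all)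
    also have "\<dots> \<le> K * M^2" using h K0 by simp
    finally show ?thesis .
  next
    assume h: "a^4 \<le> 16 * Q^(2*r-1) * M^2"
    have "C^2 * a^4 \<le> (1/16) * a^4" by (rule mult_right_mono[OF C_le]) simp
    also have "\<dots> \<le> K * M^2" using h unfolding K_def by simp
    finally show ?thesis .
  qed
  show ?thesis
  proof (rule power2_le_imp_le)
    show "(C * a^2 / Q powr ((2 * real r - 1) / 2))^2 \<le> M^2"
      unfolding square using square_le K0 by (simp add: divide_le_eq mult.commute)
    show "0 \<le> M" by (rule M)
  qed
qed

lemma max_bound_small:
  fixes Q a M C c1 c2 S :: real and r :: nat
  assumes Q: "Q > 0" and r: "r \<ge> 1" and a: "a > 0" and C: "C > 0"
    and S: "S \<le> M" and c1: "c1 > 0" and c2: "c2 > 0"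
    and C_le_c1_c2: "C^3 * c2^8 \<le> c1^3"
    and energy: "c1 * Q powr (3 * real r - 1) \<le> S * a^2"
    and small: "a \<le> c2 * Q powr (real r - 3/8)"
  shows "M \<ge> C * Q powr (real r / 3) * a powr (2/3)"
proof -
  define T where "T = Q^(3*r-1)"
  have T0: "T > 0" unfolding T_def using Q by simp
  have energy_pow: "c1 * T \<le> S * a^2"
    using energy powr_realpow[OF Q, of "3*r-1"] r unfolding T_def by (simp add: of_nat_diff)
  have S_ge: "S \<ge> c1 * T / a^2" using energy_pow a by (simp add: field_simps)
  have small_pow: "a^8 \<le> c2^8 * Q^(8*r-3)"
  proof -
    have "a^8 \<le> (c2 * Q powr (real r - 3/8))^8" by (rule power_mono[OF small]) (use a in simp)
    moreover have "(Q powr (real r - 3/8))^8 = Q^(8*r-3)"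
      by (rule powr_power_eq_power[OF Q]) (use r in \<open>simp add: of_nat_diff algebra_simps\<close>)
    ultimately show ?thesis by (simp add: power_mult_distrib)
  qed
  have cube: "(C * Q powr (real r / 3) * a powr (2/3))^3 = C^3 * Q^r * a^2"
  proof -
    have "(Q powr (real r / 3))^3 = Q^r" by (rule powr_power_eq_power[OF Q]) simp
    moreover have "(a powr (2/3))^3 = a^2" by (rule powr_power_eq_power[OF a]) simp
    ultimately show ?thesis by (simp add: power_mult_distrib)
  qed
  have Q_pow: "Q^r * Q^(8*r-3) = T^3"
  proof -
    have "r + (8*r-3) = (3*r-1) * 3" using r by simp
    then show ?thesis unfolding T_def by (metis power_add power_mult)
  qed
  have cube_le: "C^3 * Q^r * a^2 * a^6 \<le> (c1 * T)^3"
  proof -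
    have "C^3 * Q^r * a^2 * a^6 = C^3 * Q^r * a^8" by (simp add: power_add[symmetric] mult.assoc)
    also have "\<dots> \<le> C^3 * Q^r * (c2^8 * Q^(8*r-3))"
      by (rule mult_left_mono[OF small_pow]) (use C Q in simp)
    also have "\<dots> = (C^3 * c2^8) * (Q^r * Q^(8*r-3))" by (simp add: algebra_simps)
    also have "\<dots> \<le> c1^3 * (Q^r * Q^(8*r-3))" by (rule mult_right_mono[OF C_le_c1_c2]) (use Q in simp)
    also have "\<dots> = (c1 * T)^3" unfolding Q_pow by (simp add: power_mult_distrib)
    finally show ?thesis .
  qed
  have "(c1 * T)^3 \<le> (S * a^2)^3" by (rule power_mono[OF energy_pow]) (use c1 T0 in simp)
  also have "\<dots> = S^3 * a^6" by (simp add: power_mult_distrib power_mult[symmetric])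
  finally have "C^3 * Q^r * a^2 * a^6 \<le> S^3 * a^6" using cube_le by linarith
  then have "C^3 * Q^r * a^2 \<le> S^3" using a by (simp add: mult_le_cancel_right)
  also have "S^3 \<le> M^3"
  proof (rule power_mono[OF S])
    have "c1 * T / a^2 > 0" using c1 T0 a by simp
    then show "0 \<le> S" using S_ge by linarith
  qed
  finally have "(C * Q powr (real r / 3) * a powr (2/3))^3 \<le> M^3" unfolding cube .
  moreover have "M \<ge> 0" using S S_ge c1 T0 a
    by (smt (verit) divide_pos_pos zero_less_power mult_pos_pos)
  ultimately show ?thesis by (rule power_le_imp_le_base[of _ 2, simplified])
qed

lemma sum_product_bounds:
  fixes R :: "('a, 'b) ring_scheme" and c1 c2 :: real
  assumes c1: "0 < c1" and c2: "0 < c2"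
    and R: "finite_valuation_ring R" and z: "z \<in> carrier R" and max: "maximalideal (PIdl\<^bsub>R\<^esub> z) R"
    and q: "q = card (carrier (R Quot (PIdl\<^bsub>R\<^esub> z)))"
    and r: "r = (LEAST n::nat. n > 0 \<and> z [^]\<^bsub>R\<^esub> n = \<zero>\<^bsub>R\<^esub>)"
    and odd: "odd q" and A: "A \<subseteq> carrier R" and large: "real (card A) \<ge> 2 * real q ^ (r - 1)"
  defines "C \<equiv> sum_product_constant c1 c2"
  shows "let M = real (max (card (ring_sumset R A A))
                          (card (ring_sumset R (ring_squares R A) (ring_squares R A))))
    in (real (card A) \<ge> c1 * real q powr (real r - 1/3) \<longrightarrow>
          M \<ge> C * real q powr (real r / 2) * real (card A) powr (1/2)) \<and>
       (c1 * real q powr (real r - 3/8) \<le> real (card A) \<and>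
        real (card A) \<le> c2 * real q powr (real r - 1/3) \<longrightarrow>
          M \<ge> C * real (card A) ^ 2 / real q powr ((2 * real r - 1) / 2)) \<and>
       (real (card (ring_sumset R A A)) * real (card A) ^ 2 \<ge> c1 * real q powr (3 * real r - 1) \<and>
        real (card A) \<le> c2 * real q powr (real r - 3/8) \<longrightarrow>
          M \<ge> C * real q powr (real r / 3) * real (card A) powr (2/3))"
proof -
  have cring: "cring R" and fin: "finite (carrier R)" and unique: "\<exists>!M. maximalideal M R"
    using R unfolding finite_valuation_ring_def by auto
  have "M = PIdl\<^bsub>R\<^esub> z" if "maximalideal M R" for M using unique max that by auto
  then interpret finite_local_ring R z
    by (intro finite_local_ring.intro[OF cring] finite_local_ring_axioms.intro fin z max)
  define M where "M = real (max (card (ring_sumset R A A))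
                               (card (ring_sumset R (ring_squares R A) (ring_squares R A))))"
  have "q = residue_card" and "r = nil_index" unfolding q r residue_card_def nil_index_def by simp_all
  then have dichotomy: "real q ^ r * real (card A) \<le> 2 * M\<^sup>2
      \<or> real (card A) ^ 4 \<le> 16 * real q ^ (2 * r - 1) * M\<^sup>2"
    using sumset_squares_dichotomy[OF A] odd large unfolding M_def by simp
  have q0: "0 < real q" and r1: "1 \<le> r" using odd nil_index_pos \<open>r = nil_index\<close> by (auto intro: odd_pos)
  have a0: "0 < real (card A)" using large q0 by (smt (verit) zero_less_power)
  have S: "real (card (ring_sumset R A A)) \<le> M" and M0: "0 \<le> M" unfolding M_def by simp_all
  note bounds = sum_product_constant_bounds[OF c1 c2, folded C_def]
  show ?thesis
    using max_bound_large[OF q0 r1 a0 M0 bounds(1) dichotomy bounds(2,3) c1]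
      max_bound_medium[OF q0 r1 a0 M0 bounds(1) dichotomy bounds(2,4) c2]
      max_bound_small[OF q0 r1 a0 bounds(1) S c1 c2 bounds(5)]
    unfolding Let_def M_def[symmetric] by blast
qed

theorem corollary1p6:
  shows "\<forall>c1 c2 :: real. c1 > 0 \<longrightarrow> c2 > 0 \<longrightarrow> (\<exists>C :: real. C > 0 \<and>
    (\<forall>(R :: nat ring) z q r A.
       finite_valuation_ring R \<and>
       z \<in> carrier R \<and> maximalideal (PIdl\<^bsub>R\<^esub> z) R \<and>
       q = card (carrier (R Quot (PIdl\<^bsub>R\<^esub> z))) \<and>
       r = (LEAST n::nat. n > 0 \<and> z [^]\<^bsub>R\<^esub> n = \<zero>\<^bsub>R\<^esub>) \<and>
       (\<exists>p k. Factorial_Ring.prime (p::nat) \<and> odd p \<and> k > 0 \<and> q = p ^ k) \<and>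
       A \<subseteq> carrier R \<and> real (card A) \<ge> 2 * real q ^ (r - 1)
     \<longrightarrow>
       (let M = real (max (card (ring_sumset R A A))
                          (card (ring_sumset R (ring_squares R A) (ring_squares R A))))
        in
         (real (card A) \<ge> c1 * real q powr (real r - 1/3) \<longrightarrow>
            M \<ge> C * real q powr (real r / 2) * real (card A) powr (1/2)) \<and>
         (c1 * real q powr (real r - 3/8) \<le> real (card A) \<and>
          real (card A) \<le> c2 * real q powr (real r - 1/3) \<longrightarrow>
            M \<ge> C * real (card A) ^ 2 / real q powr ((2 * real r - 1) / 2)) \<and>
         (real (card (ring_sumset R A A)) * real (card A) ^ 2 \<ge> c1 * real q powr (3 * real r - 1) \<and>
          real (card A) \<le> c2 * real q powr (real r - 3/8) \<longrightarrow>
            M \<ge> C * real q powr (real r / 3) * real (card A) powr (2/3)))))"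
  apply (intro allI impI exI conjI)
   apply (erule (1) sum_product_constant_bounds(1))
  apply (elim conjE exE)
  by (rule sum_product_bounds; (assumption | metis even_power))

end
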